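(* Let $M\subseteq\mathbb R^n$ be a bounded manifold admitting a carpeting function $\phi$. Let $V$ be a closed subset of $M$ such that $V\cap U$ has finitely many connected components for every open box $U\subseteq\mathbb R^n$. Then for every sequence $(r_\kappa)_{\kappa\in\mathbb N}$ of positive reals with $r_\kappa\to0$, the sequence $\big(V\cap\phi^{-1}(r_\kappa)\big)_\kappa$ converges to $\operatorname{fr}V$ in the Hausdorff sense, i.e. $\operatorname{fr}V=\lim_\kappa\big(V\cap\phi^{-1}(r_\kappa)\big)$.
   Context: A carpeting function on $M$ is a continuous proper map $\phi:M\to(0,\infty)$ such that $\phi(x)\to0$ as $x\to y$ for every $y$ in the frontier of $M$ taken in the one-point compactification $\mathbb R^n\cup\{\infty\}$. $\operatorname{fr}V=\operatorname{cl}V\setminus V$ (closure in $\mathbb R^n$). For bounded sets $A_\kappa\subseteq\mathbb R^n$, $\lim_\kappa A_\kappa=C$ means $\operatorname{cl}A_\kappa\to C$ in the Hausdorff metric on compact subsets of $\mathbb R^n$ (with $\emptyset$ included, at distance $\infty$ from nonempty sets). A box is a product of nonempty open intervals. *)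

theory Defs
  imports "HOL-Analysis.Analysis"
begin

definition embedded_manifold :: "'a::euclidean_space set \<Rightarrow> bool" where
  "embedded_manifold M \<longleftrightarrow> (\<exists>S::'a set. subspace S \<and>
     (\<forall>x\<in>M. \<exists>U W. openin (top_of_set M) U \<and> x \<in> U \<and>
                   openin (top_of_set S) W \<and> U homeomorphic W))"

definition fr :: "'a::euclidean_space set \<Rightarrow> 'a set" where
  "fr V = closure V - V"

text \<open>Carpeting function: continuous proper map M -> (0,oo) tending to 0 at every point of the
  frontier of M in the one-point compactification (the point at infinity belongs to that
  frontier exactly when M is unbounded).\<close>
definition carpeting :: "'a::euclidean_space set \<Rightarrow> ('a \<Rightarrow> real) \<Rightarrow> bool" where
  "carpeting M \<phi> \<longleftrightarrow>
     continuous_on M \<phi> \<and> (\<forall>x\<in>M. \<phi> x > 0) \<and>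
     (\<forall>K. compact K \<and> K \<subseteq> {0<..} \<longrightarrow> compact (M \<inter> \<phi> -` K)) \<and>
     (\<forall>y \<in> closure M - M. (\<phi> \<longlongrightarrow> 0) (at y within M)) \<and>
     (\<not> bounded M \<longrightarrow> (\<phi> \<longlongrightarrow> 0) (inf at_infinity (principal M)))"

definition hausdist :: "'a::metric_space set \<Rightarrow> 'a set \<Rightarrow> real" where
  "hausdist A B = max (SUP x\<in>A. infdist x B) (SUP y\<in>B. infdist y A)"

text \<open>Hausdorff limit of bounded sets: closures converge to the compact set C in the Hausdorff
  metric on compact subsets, where the empty set is at distance infinity from nonempty sets.\<close>
definition hausdorff_lim :: "(nat \<Rightarrow> 'a::euclidean_space set) \<Rightarrow> 'a set \<Rightarrow> bool" where
  "hausdorff_lim A C \<longleftrightarrow> compact C \<and> (\<forall>k. bounded (A k)) \<and>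
     (if C = {} then eventually (\<lambda>k. A k = {}) sequentially
      else eventually (\<lambda>k. A k \<noteq> {}) sequentially \<and>
           ((\<lambda>k. hausdist (closure (A k)) C) \<longlongrightarrow> 0) sequentially)"

end

theory Submission
  imports Defs
begin

(* Write A s = V \<inter> phi -` {s}. As s tends to 0 from above, two things happen.
   First, A s eventually lies in any e-neighbourhood of fr V: the part of cl V outside that
   neighbourhood is a compact subset of V, on which phi has a positive lower bound.
   Second, each y in fr V is eventually e-close to A s: V meets a small box around y in finitely
   many components, so one component C has y in its closure; phi ` C is an interval containing a
   positive value and values arbitrarily close to 0 (phi tends to 0 at y), hence every small s.
   Being closed in a manifold, V is locally compact, so fr V is compact and the second property
   holds uniformly on fr V. *)

lemma embedded_manifold_imp_locally_compact:
  fixes M :: "'a::euclidean_space set"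
  assumes "embedded_manifold M"
  shows "locally compact M"
proof -
  obtain S :: "'a set" where "subspace S" and
    chart: "\<And>x. x \<in> M \<Longrightarrow> \<exists>U W. openin (top_of_set M) U \<and> x \<in> U \<and>
                   openin (top_of_set S) W \<and> U homeomorphic W"
    using assms unfolding embedded_manifold_def by blast
  then have lcS: "locally compact S"
    by (simp add: closed_imp_locally_compact closed_subspace)
  show ?thesis
    unfolding locally_compact
  proof
    fix x assume "x \<in> M"
    then obtain U W where U: "openin (top_of_set M) U" "x \<in> U"
      and W: "openin (top_of_set S) W" and UW: "U homeomorphic W"
      using chart by blast
    have "locally compact U"
      using homeomorphic_local_compactness[OF UW] locally_open_subset[OF lcS W] by simp
    then obtain u v where uv: "x \<in> u" "u \<subseteq> v" "v \<subseteq> U" "openin (top_of_set U) u" "compact v"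
      using U(2) unfolding locally_compact by meson
    show "\<exists>u v. x \<in> u \<and> u \<subseteq> v \<and> v \<subseteq> M \<and> openin (top_of_set M) u \<and> compact v"
    proof (intro exI conjI)
      show "openin (top_of_set M) u"
        using openin_trans[OF uv(4) U(1)] .
      show "v \<subseteq> M"
        using uv(3) openin_imp_subset[OF U(1)] by (rule order_trans)
    qed (use uv in auto)
  qed
qed

lemma compact_fr_if_locally_compact:
  fixes S :: "'a::euclidean_space set"
  assumes "bounded S" "locally compact S"
  shows "compact (fr S)"
proof -
  obtain T where "open T" "S = T \<inter> closure S"
    using locally_compact_open_Int_closure[OF assms(2)] .
  then have "fr S = closure S - T"
    unfolding fr_def by blast
  with \<open>open T\<close> \<open>bounded S\<close> show ?thesis
    by (simp add: compact_diff compact_closure)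
qed

lemma carpeting_restrict_closedin:
  assumes "carpeting M \<phi>" "closedin (top_of_set M) V"
  shows "continuous_on V \<phi>" "\<And>x. x \<in> V \<Longrightarrow> \<phi> x > 0"
    and "\<And>y. y \<in> fr V \<Longrightarrow> (\<phi> \<longlongrightarrow> 0) (at y within V)"
proof -
  obtain T where "closed T" "V = M \<inter> T"
    using assms(2) closedin_closed by blast
  then have "V \<subseteq> M" "fr V \<subseteq> closure M - M"
    unfolding fr_def using closure_mono[of V M] closure_minimal[of V T] by auto
  with assms(1) show "continuous_on V \<phi>" "\<And>x. x \<in> V \<Longrightarrow> \<phi> x > 0"
    unfolding carpeting_def by (auto intro: continuous_on_subset)
  show "(\<phi> \<longlongrightarrow> 0) (at y within V)" if "y \<in> fr V" for y
    using assms(1) \<open>V \<subseteq> M\<close> \<open>fr V \<subseteq> closure M - M\<close> that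
    unfolding carpeting_def by (blast intro: tendsto_within_subset)
qed

lemma closure_eq_Union_closure_components:
  assumes "finite (components S)"
  shows "closure S = \<Union>(closure ` components S)"
proof
  show "closure S \<subseteq> \<Union>(closure ` components S)"
  proof (rule closure_minimal)
    show "S \<subseteq> \<Union>(closure ` components S)"
      using closure_subset by (metis Sup_mono Union_components imageI)
    show "closed (\<Union>(closure ` components S))"
      using assms by (intro closed_Union) auto
  qed
  show "\<Union>(closure ` components S) \<subseteq> closure S"
    by (simp add: SUP_least closure_mono in_components_subset)
qed

lemma eventually_at_right_in_connected_image:
  fixes f :: "'a::topological_space \<Rightarrow> real"
  assumes "connected C" "continuous_on C f" "c \<in> C" "f c > 0"
    and "y islimpt C" "(f \<longlongrightarrow> 0) (at y within C)"
  shows "eventually (\<lambda>s. s \<in> f ` C) (at_right 0)"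
proof -
  have "\<exists>c'\<in>C. f c' < s" if "s > 0" for s
  proof -
    have "eventually (\<lambda>x. f x < s) (at y within C)"
      using order_tendstoD(2)[OF assms(6) that] .
    moreover have "eventually (\<lambda>x. x \<in> C) (at y within C)"
      by (simp add: eventually_at_filter)
    moreover have "at y within C \<noteq> bot"
      using assms(5) by (simp add: trivial_limit_within)
    ultimately show ?thesis
      by (metis (mono_tags, lifting) eventually_conj eventually_happens')
  qed
  moreover have "connected (f ` C)"
    using assms(1,2) by (simp add: connected_continuous_image)
  ultimately have "s \<in> f ` C" if "0 < s" "s < f c" for s
    using connected_contains_Icc[of "f ` C"] assms(3) that by fastforce
  then show ?thesis
    unfolding eventually_at_right_field using assms(4) by blast
qed

lemma eventually_level_set_meets_ball_at_fr:
  fixes V :: "'a::euclidean_space set" and \<phi> :: "'a \<Rightarrow> real"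
  assumes cont: "continuous_on V \<phi>" and pos: "\<And>x. x \<in> V \<Longrightarrow> \<phi> x > 0"
    and fin: "\<And>a b. box a b \<noteq> {} \<Longrightarrow> finite (components (V \<inter> box a b))"
    and y: "y \<in> fr V" and lim: "(\<phi> \<longlongrightarrow> 0) (at y within V)" and "e > 0"
  shows "eventually (\<lambda>s. \<exists>v\<in>V \<inter> \<phi> -` {s}. dist v y < e) (at_right 0)"
proof -
  obtain a b where ab: "box a b \<subseteq> ball y e" "y \<in> box a b"
    using open_contains_box[of "ball y e" y] \<open>e > 0\<close> by (metis centre_in_ball open_ball)
  have "y \<in> closure V" "y \<notin> V"
    using y unfolding fr_def by auto
  then have "y \<in> closure (V \<inter> box a b)"
    using open_Int_closure_subset[of "box a b" V] ab(2) by (auto simp: Int_commute)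
  then obtain C where C: "C \<in> components (V \<inter> box a b)" "y \<in> closure C"
    using closure_eq_Union_closure_components[OF fin] ab(2) by blast
  have CV: "C \<subseteq> V \<inter> box a b"
    using C(1) by (rule in_components_subset)
  obtain c where "c \<in> C"
    using C(1) in_components_nonempty by blast
  have "y islimpt C"
    using C(2) CV \<open>y \<notin> V\<close> by (auto simp: closure_def)
  have "eventually (\<lambda>s. s \<in> \<phi> ` C) (at_right 0)"
  proof (rule eventually_at_right_in_connected_image)
    show "connected C"
      using C(1) by (rule in_components_connected)
    show "continuous_on C \<phi>" "\<phi> c > 0" "(\<phi> \<longlongrightarrow> 0) (at y within C)"
      using CV \<open>c \<in> C\<close> continuous_on_subset[OF cont] pos tendsto_within_subset[OF lim] by auto
  qed fact+
  then show ?thesis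
    by eventually_elim (use CV ab(1) in \<open>force simp: dist_commute\<close>)
qed

lemma eventually_approx_uniformly_on_compact:
  fixes K :: "'a::metric_space set" and L :: "'b \<Rightarrow> 'a set"
  assumes "compact K"
    and approx: "\<And>y e. y \<in> K \<Longrightarrow> e > 0 \<Longrightarrow> eventually (\<lambda>s. \<exists>v\<in>L s. dist v y < e) F"
    and "e > 0"
  shows "eventually (\<lambda>s. \<forall>y\<in>K. \<exists>v\<in>L s. dist v y < e) F"
proof -
  obtain D where D: "D \<subseteq> K" "finite D" "K \<subseteq> (\<Union>d\<in>D. ball d (e/2))"
    using compactE_image[OF \<open>compact K\<close>, of K "\<lambda>d. ball d (e/2)"] \<open>e > 0\<close> by force
  have "eventually (\<lambda>s. \<forall>d\<in>D. \<exists>v\<in>L s. dist v d < e/2) F"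
    using D(1) approx[of _ "e/2"] \<open>e > 0\<close> by (intro eventually_ball_finite[OF D(2)]) auto
  then show ?thesis
  proof eventually_elim
    case (elim s)
    show ?case
    proof
      fix y assume "y \<in> K"
      then obtain d where d: "d \<in> D" "dist d y < e/2"
        using D(3) by auto
      then obtain v where "v \<in> L s" "dist v d < e/2"
        using elim by blast
      then show "\<exists>v\<in>L s. dist v y < e"
        using d(2) dist_triangle[of v y d] by (intro bexI[of _ v]) auto
    qed
  qed
qed

lemma eventually_level_set_near_fr:
  fixes V :: "'a::euclidean_space set" and \<phi> :: "'a \<Rightarrow> real"
  assumes "bounded V" "continuous_on V \<phi>" "\<And>x. x \<in> V \<Longrightarrow> \<phi> x > 0" "e > 0"
  shows "eventually (\<lambda>s. \<forall>v\<in>V \<inter> \<phi> -` {s}. \<exists>y\<in>fr V. dist v y < e) (at_right 0)"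
proof -
  define K where "K = closure V - (\<Union>y\<in>fr V. ball y e)"
  have "compact K"
    unfolding K_def using assms(1)
    by (intro compact_diff) (auto simp: compact_closure)
  have "K \<subseteq> V"
    unfolding K_def fr_def using \<open>e > 0\<close> by force
  then have "compact (\<phi> ` K)"
    using \<open>compact K\<close> continuous_on_subset[OF assms(2)] by (blast intro: compact_continuous_image)
  then have "open (- \<phi> ` K)"
    by (simp add: compact_imp_closed open_Compl)
  moreover have "0 \<notin> \<phi> ` K"
    using \<open>K \<subseteq> V\<close> assms(3) by force
  ultimately have "eventually (\<lambda>s. s \<notin> \<phi> ` K) (at_right 0)"
    unfolding eventually_at_topological by blast
  then show ?thesis
    by eventually_elim (auto simp: K_def fr_def dist_commute dest: closure_subset[THEN subsetD])
qed

lemma hausdist_le: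
  fixes A B :: "'a::metric_space set"
  assumes "A \<noteq> {}" "B \<noteq> {}"
    and "\<And>x. x \<in> A \<Longrightarrow> infdist x B \<le> e" "\<And>y. y \<in> B \<Longrightarrow> infdist y A \<le> e"
  shows "0 \<le> hausdist A B" "hausdist A B \<le> e"
proof -
  obtain a where "a \<in> A"
    using assms(1) by blast
  have "bdd_above ((\<lambda>x. infdist x B) ` A)"
    using assms(3) by (meson bdd_aboveI2)
  then have "infdist a B \<le> (SUP x\<in>A. infdist x B)"
    using \<open>a \<in> A\<close> by (rule cSUP_upper2) simp
  then show "0 \<le> hausdist A B"
    unfolding hausdist_def using infdist_nonneg[of a B] by linarith
  have "(SUP x\<in>A. infdist x B) \<le> e" "(SUP y\<in>B. infdist y A) \<le> e"
    using assms by (auto intro: cSUP_least)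
  then show "hausdist A B \<le> e"
    unfolding hausdist_def by simp
qed

lemma hausdorff_limI:
  fixes A :: "nat \<Rightarrow> 'a::euclidean_space set"
  assumes "compact C" "\<And>k. bounded (A k)"
    and near: "\<And>e. e > 0 \<Longrightarrow> eventually (\<lambda>k. \<forall>x\<in>A k. \<exists>y\<in>C. dist x y < e) sequentially"
    and cover: "\<And>e. e > 0 \<Longrightarrow> eventually (\<lambda>k. \<forall>y\<in>C. \<exists>x\<in>A k. dist x y < e) sequentially"
  shows "hausdorff_lim A C"
proof (cases "C = {}")
  case True
  have "eventually (\<lambda>k. \<forall>x\<in>A k. \<exists>y\<in>C. dist x y < 1) sequentially"
    by (rule near) simp
  then have "eventually (\<lambda>k. A k = {}) sequentially"
    by eventually_elim (auto simp: True)
  with True assms(1,2) show ?thesis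
    unfolding hausdorff_lim_def by simp
next
  case False
  have bound: "eventually (\<lambda>k. A k \<noteq> {} \<and> 0 \<le> hausdist (closure (A k)) C
                  \<and> hausdist (closure (A k)) C \<le> e) sequentially" if "e > 0" for e
    using near[OF that] cover[OF that]
  proof eventually_elim
    case (elim k)
    then have "A k \<noteq> {}"
      using False by blast
    have "closure (A k) \<subseteq> {x. infdist x C \<le> e}"
    proof (rule closure_minimal)
      show "A k \<subseteq> {x. infdist x C \<le> e}"
        using elim(1) infdist_le[of _ C] by (fastforce intro: order_trans)
      show "closed {x. infdist x C \<le> e}"
        by (intro closed_Collect_le continuous_intros)
    qed
    moreover have "infdist y (closure (A k)) \<le> e" if "y \<in> C" for y
    proof -
      obtain x where "x \<in> A k" "dist x y < e"
        using elim(2) \<open>y \<in> C\<close> by blast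
      then show ?thesis
        using infdist_le[OF closure_subset[THEN subsetD], of x "A k" y] by (simp add: dist_commute)
    qed
    ultimately show ?case
      using hausdist_le[of "closure (A k)" C e] \<open>A k \<noteq> {}\<close> False by auto
  qed
  have "((\<lambda>k. hausdist (closure (A k)) C) \<longlongrightarrow> 0) sequentially"
  proof (rule tendstoI)
    fix e :: real assume "e > 0"
    then have "eventually (\<lambda>k. 0 \<le> hausdist (closure (A k)) C \<and> hausdist (closure (A k)) C \<le> e/2) sequentially"
      using bound[of "e/2"] by (auto elim: eventually_mono)
    then show "eventually (\<lambda>k. dist (hausdist (closure (A k)) C) 0 < e) sequentially"
      by eventually_elim (use \<open>e > 0\<close> in auto)
  qed
  moreover have "eventually (\<lambda>k. A k \<noteq> {}) sequentially"
    using bound[of 1] by (auto elim: eventually_mono)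
  ultimately show ?thesis
    unfolding hausdorff_lim_def using False assms(1,2) by simp
qed

theorem lemma1p7:
  fixes M V :: "'a::euclidean_space set" and \<phi> :: "'a \<Rightarrow> real" and r :: "nat \<Rightarrow> real"
  assumes "bounded M" and "embedded_manifold M" and "carpeting M \<phi>"
    and "closedin (top_of_set M) V"
    and "\<And>a b. box a b \<noteq> {} \<Longrightarrow> finite (components (V \<inter> box a b))"
    and "\<And>k. r k > 0" and "r \<longlonglongrightarrow> 0"
  shows "hausdorff_lim (\<lambda>k. V \<inter> \<phi> -` {r k}) (fr V)"
proof -
  note cont = carpeting_restrict_closedin(1)[OF assms(3,4)]
    and pos = carpeting_restrict_closedin(2)[OF assms(3,4)]
    and lim = carpeting_restrict_closedin(3)[OF assms(3,4)]
  have "bounded V"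
    using assms(1) closedin_imp_subset[OF assms(4)] by (rule bounded_subset)
  moreover have "locally compact V"
    using assms(4) embedded_manifold_imp_locally_compact[OF assms(2)] by (rule locally_compact_closedin)
  ultimately have "compact (fr V)"
    by (rule compact_fr_if_locally_compact)
  have r: "filterlim r (at_right 0) sequentially"
    using assms(6,7) by (intro tendsto_imp_filterlim_at_right) auto
  show ?thesis
  proof (rule hausdorff_limI)
    fix e :: real assume "e > 0"
    show "eventually (\<lambda>k. \<forall>x\<in>V \<inter> \<phi> -` {r k}. \<exists>y\<in>fr V. dist x y < e) sequentially"
      using eventually_compose_filterlim[OF eventually_level_set_near_fr[OF \<open>bounded V\<close> cont pos \<open>e > 0\<close>] r] .
    have "eventually (\<lambda>s. \<forall>y\<in>fr V. \<exists>v\<in>V \<inter> \<phi> -` {s}. dist v y < e) (at_right 0)"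
      using \<open>compact (fr V)\<close> eventually_level_set_meets_ball_at_fr[OF cont pos assms(5) _ lim] \<open>e > 0\<close>
      by (rule eventually_approx_uniformly_on_compact)
    from eventually_compose_filterlim[OF this r]
    show "eventually (\<lambda>k. \<forall>y\<in>fr V. \<exists>x\<in>V \<inter> \<phi> -` {r k}. dist x y < e) sequentially" .
  qed (use \<open>compact (fr V)\<close> \<open>bounded V\<close> in auto)
qed

end
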